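(* Let $L$ be a Poisson $\mathfrak{h}$-base manifold. Then the bivector field $\varpi:=\sum_i\vec{\eta^i}\wedge\vec{h^i}$ is a Poisson bracket on $L$ making $L$ a Poisson-Lie $D(\mathfrak{h})$-manifold, and $\varpi$ coincides with the bivector field $\sum_i\vec{\eta^i}\otimes\vec{h^i}$, i.e. $\varpi(a,b)=\sum_i(\vec{\eta^i}a)(\vec{h^i}b)$.
   Context: $\mathfrak{h}$ is a finite dimensional complex Lie bialgebra and $D(\mathfrak{h})=\mathfrak{h}\oplus\mathfrak{h}^*_{op}$ its Drinfeld double ($\mathfrak{h}^*_{op}$ the dual Lie algebra with opposite bracket; $D(\mathfrak{h})$ carries the unique Lie bracket extending those of $\mathfrak{h}$, $\mathfrak{h}^*_{op}$ for which the natural symmetric pairing is invariant). $\{h^i\}$ is a basis of $\mathfrak{h}$ and $\{\eta^i\}$ the dual basis of $\mathfrak{h}^*_{op}$; $x\wedge y=\frac12(x\otimes y-y\otimes x)$. $D(\mathfrak{h})$ is a coboundary Lie bialgebra with r-matrix $r=\sum_i\eta^i\wedge h^i$, cobracket $\mu(x)=[x\otimes1+1\otimes x,r]$, and $\theta=\frac12\sum_i(\eta^i\otimes h^i+h^i\otimes\eta^i)$. A Poisson $\mathfrak{h}$-base manifold is a manifold $L$ whose function algebra $\mathcal{A}(L)$ carries an action $x\mapsto\vec x$ of $D(\mathfrak{h})$ by vector fields such that $\theta$ induces the zero bidifferential operator: $\sum_i\bigl((\vec{\eta^i}a)(\vec{h^i}b)+(\vec{h^i}a)(\vec{\eta^i}b)\bigr)=0$.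 A Poisson bracket $\pi$ on a manifold with action $x\mapsto\vec x$ of a Lie bialgebra with cobracket $\mu$ makes it a Poisson-Lie manifold if $\vec x\pi(a,b)-\pi(\vec xa,b)-\pi(a,\vec xb)=\overrightarrow{\mu(x)}(a,b)$ for all $x$ and functions $a,b$, where $\overrightarrow{\mu(x)}$ is the bidifferential operator induced by $\mu(x)$. *)

theory Defs
  imports "HOL-Analysis.Analysis"
begin

definition lie_bracket_on :: "(complex^'k \<Rightarrow> complex^'k \<Rightarrow> complex^'k) \<Rightarrow> bool" where
  "lie_bracket_on B \<longleftrightarrow>
     (\<forall>x y z. B (x + y) z = B x z + B y z) \<and>
     (\<forall>x y z. B x (y + z) = B x y + B x z) \<and>
     (\<forall>c x y. B (c *s x) y = c *s B x y) \<and>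
     (\<forall>c x y. B x (c *s y) = c *s B x y) \<and>
     (\<forall>x. B x x = 0) \<and>
     (\<forall>x y z. B x (B y z) + B y (B z x) + B z (B x y) = 0)"

section \<open>Lie bialgebra h = complex^'n with standard basis h^i = axis i 1\<close>

text \<open>Elements of h \<otimes> h are coefficient matrices: T $ i $ j is the coefficient of h^i \<otimes> h^j.\<close>

text \<open>Dual Lie bracket on h* (coordinates w.r.t. the dual basis), transpose of the cobracket:
  [xi,zeta](x) = <xi \<otimes> zeta, delta x>.\<close>
definition dual_br :: "(complex^'n \<Rightarrow> complex^'n^'n) \<Rightarrow> complex^'n \<Rightarrow> complex^'n \<Rightarrow> complex^'n::finite" where
  "dual_br delta xi zeta = (\<chi> k. \<Sum>i\<in>UNIV. \<Sum>j\<in>UNIV. xi$i * zeta$j * delta (axis k 1) $ i $ j)"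

text \<open>Adjoint action of x on h \<otimes> h: x.(a\<otimes>b) = [x,a]\<otimes>b + a\<otimes>[x,b].\<close>
definition adT :: "(complex^'n \<Rightarrow> complex^'n \<Rightarrow> complex^'n) \<Rightarrow> complex^'n \<Rightarrow> complex^'n^'n \<Rightarrow> complex^'n^'n::finite" where
  "adT br x T = (\<chi> i j. (\<Sum>a\<in>UNIV. T$a$j * (br x (axis a 1))$i) + (\<Sum>a\<in>UNIV. T$i$a * (br x (axis a 1))$j))"

definition lie_bialgebra :: "(complex^'n \<Rightarrow> complex^'n \<Rightarrow> complex^'n) \<Rightarrow> (complex^'n \<Rightarrow> complex^'n^'n::finite) \<Rightarrow> bool" where
  "lie_bialgebra br delta \<longleftrightarrow>
     lie_bracket_on br \<and>
     (\<forall>x y. delta (x + y) = delta x + delta y) \<and>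
     (\<forall>c x. delta (c *s x) = (\<chi> i j. c * delta x $ i $ j)) \<and>
     (\<forall>x i j. delta x $ i $ j = - delta x $ j $ i) \<and>
     lie_bracket_on (dual_br delta) \<and>
     (\<forall>x y. delta (br x y) = adT br x (delta y) - adT br y (delta x))"

section \<open>The Drinfeld double D(h) = h \<oplus> h*_op, realised as complex^('n + 'n)\<close>

text \<open>Inl i-coordinate = coefficient of h^i, Inr i-coordinate = coefficient of eta^i.\<close>
definition hD :: "'n::finite \<Rightarrow> complex^('n + 'n)" where
  "hD i = axis (Inl i) 1"

definition etaD :: "'n::finite \<Rightarrow> complex^('n + 'n)" where
  "etaD i = axis (Inr i) 1"

definition embH :: "complex^'n \<Rightarrow> complex^('n::finite + 'n)" where
  "embH x = (\<chi> k. case k of Inl i \<Rightarrow> x$i | Inr j \<Rightarrow> 0)"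

definition embHs :: "complex^'n \<Rightarrow> complex^('n::finite + 'n)" where
  "embHs xi = (\<chi> k. case k of Inl i \<Rightarrow> 0 | Inr j \<Rightarrow> xi$j)"

definition pairD :: "complex^('n::finite + 'n) \<Rightarrow> complex^('n + 'n) \<Rightarrow> complex" where
  "pairD u v = (\<Sum>i\<in>UNIV. u$(Inl i) * v$(Inr i) + u$(Inr i) * v$(Inl i))"

text \<open>bD is the Drinfeld double bracket: the (unique) Lie bracket on h \<oplus> h*_op extending the
  bracket of h and the opposite of the dual bracket of h*, for which the pairing is invariant.\<close>
definition drinfeld_double_bracket ::
  "(complex^'n \<Rightarrow> complex^'n \<Rightarrow> complex^'n) \<Rightarrow> (complex^'n \<Rightarrow> complex^'n^'n)
   \<Rightarrow> (complex^('n + 'n) \<Rightarrow> complex^('n + 'n) \<Rightarrow> complex^('n::finite + 'n)) \<Rightarrow> bool" where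
  "drinfeld_double_bracket br delta bD \<longleftrightarrow>
     lie_bracket_on bD \<and>
     (\<forall>x y. bD (embH x) (embH y) = embH (br x y)) \<and>
     (\<forall>xi zeta. bD (embHs xi) (embHs zeta) = embHs (- dual_br delta xi zeta)) \<and>
     (\<forall>u v w. pairD (bD u v) w = pairD u (bD v w))"

definition fun_subalgebra :: "('m \<Rightarrow> complex) set \<Rightarrow> bool" where
  "fun_subalgebra A \<longleftrightarrow> (\<forall>c. (\<lambda>p. c) \<in> A) \<and>
     (\<forall>a\<in>A. \<forall>b\<in>A. (\<lambda>p. a p + b p) \<in> A \<and> (\<lambda>p. a p * b p) \<in> A)"

text \<open>Vector fields = complex-linear derivations of the function algebra.\<close>
definition derivation_on :: "('m \<Rightarrow> complex) set \<Rightarrow> (('m \<Rightarrow> complex) \<Rightarrow> ('m \<Rightarrow> complex)) \<Rightarrow> bool" where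
  "derivation_on A X \<longleftrightarrow>
     (\<forall>a\<in>A. X a \<in> A) \<and>
     (\<forall>a\<in>A. \<forall>b\<in>A. X (\<lambda>p. a p + b p) = (\<lambda>p. X a p + X b p)) \<and>
     (\<forall>c. \<forall>a\<in>A. X (\<lambda>p. c * a p) = (\<lambda>p. c * X a p)) \<and>
     (\<forall>a\<in>A. \<forall>b\<in>A. X (\<lambda>p. a p * b p) = (\<lambda>p. X a p * b p + a p * X b p))"

definition poisson_bracket_on :: "('m \<Rightarrow> complex) set \<Rightarrow> (('m \<Rightarrow> complex) \<Rightarrow> ('m \<Rightarrow> complex) \<Rightarrow> ('m \<Rightarrow> complex)) \<Rightarrow> bool" where
  "poisson_bracket_on A P \<longleftrightarrow>
     (\<forall>a\<in>A. \<forall>b\<in>A. P a b = (\<lambda>p. - P b a p)) \<and>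
     (\<forall>a\<in>A. derivation_on A (P a)) \<and>
     (\<forall>b\<in>A. derivation_on A (\<lambda>a. P a b)) \<and>
     (\<forall>a\<in>A. \<forall>b\<in>A. \<forall>c\<in>A. (\<lambda>p. P a (P b c) p + P b (P c a) p + P c (P a b) p) = (\<lambda>p. 0))"

definition lie_action_on :: "('m \<Rightarrow> complex) set \<Rightarrow> (complex^'k \<Rightarrow> complex^'k \<Rightarrow> complex^'k)
    \<Rightarrow> (complex^'k \<Rightarrow> ('m \<Rightarrow> complex) \<Rightarrow> ('m \<Rightarrow> complex)) \<Rightarrow> bool" where
  "lie_action_on A B act \<longleftrightarrow>
     (\<forall>u. derivation_on A (act u)) \<and>
     (\<forall>u v. \<forall>a\<in>A. act (u + v) a = (\<lambda>p. act u a p + act v a p)) \<and>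
     (\<forall>c u. \<forall>a\<in>A. act (c *s u) a = (\<lambda>p. c * act u a p)) \<and>
     (\<forall>u v. \<forall>a\<in>A. act (B u v) a = (\<lambda>p. act u (act v a) p - act v (act u a) p))"

text \<open>u \<otimes> v induces (a,b) \<mapsto> (u a)(v b); u \<wedge> v = (u\<otimes>v - v\<otimes>u)/2.\<close>
definition simple_op where
  "simple_op act u v a b = (\<lambda>p. act u a p * act v b p)"

definition wedge_op where
  "wedge_op act u v a b = (\<lambda>p. (act u a p * act v b p - act v a p * act u b p) / 2)"

text \<open>varpi = operator induced by r = \<Sum>_i eta^i \<wedge> h^i.\<close>
definition varpi :: "(complex^('n::finite + 'n) \<Rightarrow> ('m \<Rightarrow> complex) \<Rightarrow> ('m \<Rightarrow> complex))
    \<Rightarrow> ('m \<Rightarrow> complex) \<Rightarrow> ('m \<Rightarrow> complex) \<Rightarrow> ('m \<Rightarrow> complex)" where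
  "varpi act a b = (\<lambda>p. \<Sum>i\<in>(UNIV::'n set). wedge_op act (etaD i) (hD i) a b p)"

definition theta_op :: "(complex^('n::finite + 'n) \<Rightarrow> ('m \<Rightarrow> complex) \<Rightarrow> ('m \<Rightarrow> complex))
    \<Rightarrow> ('m \<Rightarrow> complex) \<Rightarrow> ('m \<Rightarrow> complex) \<Rightarrow> ('m \<Rightarrow> complex)" where
  "theta_op act a b = (\<lambda>p. (\<Sum>i\<in>(UNIV::'n set).
       simple_op act (etaD i) (hD i) a b p + simple_op act (hD i) (etaD i) a b p) / 2)"

text \<open>mu(x) = [x\<otimes>1 + 1\<otimes>x, r] = \<Sum>_i ([x,eta^i] \<wedge> h^i + eta^i \<wedge> [x,h^i]), and its induced operator.\<close>
definition mu_op :: "(complex^('n::finite + 'n) \<Rightarrow> complex^('n + 'n) \<Rightarrow> complex^('n + 'n))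
    \<Rightarrow> (complex^('n + 'n) \<Rightarrow> ('m \<Rightarrow> complex) \<Rightarrow> ('m \<Rightarrow> complex))
    \<Rightarrow> complex^('n + 'n) \<Rightarrow> ('m \<Rightarrow> complex) \<Rightarrow> ('m \<Rightarrow> complex) \<Rightarrow> ('m \<Rightarrow> complex)" where
  "mu_op bD act x a b = (\<lambda>p. \<Sum>i\<in>(UNIV::'n set).
       wedge_op act (bD x (etaD i)) (hD i) a b p + wedge_op act (etaD i) (bD x (hD i)) a b p)"

definition poisson_base_manifold ::
  "(complex^'n \<Rightarrow> complex^'n \<Rightarrow> complex^'n) \<Rightarrow> (complex^'n \<Rightarrow> complex^'n^'n)
   \<Rightarrow> (complex^('n + 'n) \<Rightarrow> complex^('n + 'n) \<Rightarrow> complex^('n::finite + 'n))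
   \<Rightarrow> ('m \<Rightarrow> complex) set \<Rightarrow> (complex^('n + 'n) \<Rightarrow> ('m \<Rightarrow> complex) \<Rightarrow> ('m \<Rightarrow> complex)) \<Rightarrow> bool" where
  "poisson_base_manifold br delta bD A act \<longleftrightarrow>
     lie_bialgebra br delta \<and> drinfeld_double_bracket br delta bD \<and>
     fun_subalgebra A \<and> lie_action_on A bD act \<and>
     (\<forall>a\<in>A. \<forall>b\<in>A. theta_op act a b = (\<lambda>p. 0))"

definition poisson_lie_manifold ::
  "('m \<Rightarrow> complex) set \<Rightarrow> (complex^'k \<Rightarrow> ('m \<Rightarrow> complex) \<Rightarrow> ('m \<Rightarrow> complex))
   \<Rightarrow> (complex^'k \<Rightarrow> ('m \<Rightarrow> complex) \<Rightarrow> ('m \<Rightarrow> complex) \<Rightarrow> ('m \<Rightarrow> complex))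
   \<Rightarrow> (('m \<Rightarrow> complex) \<Rightarrow> ('m \<Rightarrow> complex) \<Rightarrow> ('m \<Rightarrow> complex)) \<Rightarrow> bool" where
  "poisson_lie_manifold A act muop P \<longleftrightarrow>
     poisson_bracket_on A P \<and>
     (\<forall>x. \<forall>a\<in>A. \<forall>b\<in>A.
        (\<lambda>p. act x (P a b) p - P (act x a) b p - P a (act x b) p) = muop x a b)"

end

theory Submission
  imports Defs
begin

(* Vanishing of theta means  sum_i (eta_i a)(h_i b) = - sum_i (h_i a)(eta_i b),  writing eta_i, h_i for
   the vector fields of the basis.  Hence varpi coincides with the one-sided operator
   F(a,b) = sum_i (eta_i a)(h_i b), which is a biderivation and, by the same identity, skew.

   Compatibility with the cobracket needs no theta: by the Leibniz rule and [x,u] c = x (u c) - u (x c),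
   the defect  x((u a)(v b)) - (u (x a))(v b) - (u a)(v (x b))  equals  ([x,u] a)(v b) + (u a)([x,v] b),
   and summing the wedge version of this over the basis gives mu(x).

   For the Jacobi identity, expanding the Jacobiator of F and using theta once more leaves only the
   commutators [h_i,h_j], [h_i,eta_j], [eta_i,eta_j].  Expanded in the basis, their coefficients are
   pairings <[u,v],w> of basis vectors; since h and h* are isotropic subalgebras only the mixed ones
   occur, and invariance,  <[u,v],w> + <[u,w],v> = 0,  makes them cancel in pairs. *)

lemma fun_subalgebra_const: "fun_subalgebra A \<Longrightarrow> (\<lambda>p. c) \<in> A"
  unfolding fun_subalgebra_def by blast

lemma fun_subalgebra_add: "fun_subalgebra A \<Longrightarrow> a \<in> A \<Longrightarrow> b \<in> A \<Longrightarrow> (\<lambda>p. a p + b p) \<in> A"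
  unfolding fun_subalgebra_def by blast

lemma fun_subalgebra_mult: "fun_subalgebra A \<Longrightarrow> a \<in> A \<Longrightarrow> b \<in> A \<Longrightarrow> (\<lambda>p. a p * b p) \<in> A"
  unfolding fun_subalgebra_def by blast

lemma fun_subalgebra_cmult: "fun_subalgebra A \<Longrightarrow> a \<in> A \<Longrightarrow> (\<lambda>p. c * a p) \<in> A"
  using fun_subalgebra_mult[of A "\<lambda>p. c" a] fun_subalgebra_const by blast

lemma fun_subalgebra_sum:
  assumes "fun_subalgebra A" "finite S" "\<And>i. i \<in> S \<Longrightarrow> f i \<in> A"
  shows "(\<lambda>p. \<Sum>i\<in>S. f i p) \<in> A"
  using assms(2,3)
proof (induction S rule: finite_induct)
  case empty
  then show ?case using fun_subalgebra_const[OF assms(1)] by simp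
next
  case (insert x F)
  then show ?case using fun_subalgebra_add[OF assms(1), of "f x" "\<lambda>p. \<Sum>i\<in>F. f i p"] by simp
qed

lemma derivation_on_closed: "derivation_on A D \<Longrightarrow> a \<in> A \<Longrightarrow> D a \<in> A"
  unfolding derivation_on_def by blast

lemma derivation_on_add:
  "derivation_on A D \<Longrightarrow> a \<in> A \<Longrightarrow> b \<in> A \<Longrightarrow> D (\<lambda>p. a p + b p) = (\<lambda>p. D a p + D b p)"
  unfolding derivation_on_def by blast

lemma derivation_on_cmult: "derivation_on A D \<Longrightarrow> a \<in> A \<Longrightarrow> D (\<lambda>p. c * a p) = (\<lambda>p. c * D a p)"
  unfolding derivation_on_def by blast

lemma derivation_on_mult:
  "derivation_on A D \<Longrightarrow> a \<in> A \<Longrightarrow> b \<in> A \<Longrightarrow> D (\<lambda>p. a p * b p) = (\<lambda>p. D a p * b p + a p * D b p)"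
  unfolding derivation_on_def by blast

lemma derivation_on_linear:
  assumes "derivation_on A D" "fun_subalgebra A" "a \<in> A" "b \<in> A"
  shows "D (\<lambda>p. c * a p + d * b p) = (\<lambda>p. c * D a p + d * D b p)"
  using derivation_on_add[OF assms(1) fun_subalgebra_cmult[OF assms(2,3)] fun_subalgebra_cmult[OF assms(2,4)]]
    derivation_on_cmult[OF assms(1,3)] derivation_on_cmult[OF assms(1,4)] by simp

lemma derivation_on_sum:
  assumes "derivation_on A D" "fun_subalgebra A" "finite S" "\<And>i. i \<in> S \<Longrightarrow> f i \<in> A"
  shows "D (\<lambda>p. \<Sum>i\<in>S. f i p) = (\<lambda>p. \<Sum>i\<in>S. D (f i) p)"
  using assms(3,4)
proof (induction S rule: finite_induct)
  case empty
  then show ?case using derivation_on_cmult[OF assms(1) fun_subalgebra_const[OF assms(2)], of 0 0] by simp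
next
  case (insert x F)
  then show ?case
    using derivation_on_add[OF assms(1), of "f x" "\<lambda>p. \<Sum>i\<in>F. f i p"]
      fun_subalgebra_sum[OF assms(2) insert(1), of f]
    by simp
qed

lemma derivation_on_cong:
  assumes "fun_subalgebra A" "derivation_on A D" "\<And>a. a \<in> A \<Longrightarrow> D' a = D a"
  shows "derivation_on A D'"
  using assms(2) fun_subalgebra_add[OF assms(1)] fun_subalgebra_mult[OF assms(1)]
    fun_subalgebra_cmult[OF assms(1)]
  unfolding derivation_on_def assms(3)[symmetric] by (simp add: assms(3))

lemma derivation_on_combination:
  assumes SA: "fun_subalgebra A" and "finite S"
    and D: "\<And>i. i \<in> S \<Longrightarrow> derivation_on A (D i)" and f: "\<And>i. i \<in> S \<Longrightarrow> f i \<in> A"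
  shows "derivation_on A (\<lambda>b p. \<Sum>i\<in>S. f i p * D i b p)"
  unfolding derivation_on_def
proof (intro conjI ballI allI)
  fix b assume "b \<in> A"
  then show "(\<lambda>p. \<Sum>i\<in>S. f i p * D i b p) \<in> A"
    using fun_subalgebra_sum[OF SA \<open>finite S\<close>] fun_subalgebra_mult[OF SA] f derivation_on_closed[OF D]
    by simp
next
  fix b b' assume "b \<in> A" "b' \<in> A"
  then show "(\<lambda>p. \<Sum>i\<in>S. f i p * D i (\<lambda>p. b p + b' p) p)
      = (\<lambda>p. (\<Sum>i\<in>S. f i p * D i b p) + (\<Sum>i\<in>S. f i p * D i b' p))"
    and "(\<lambda>p. \<Sum>i\<in>S. f i p * D i (\<lambda>p. b p * b' p) p)
      = (\<lambda>p. (\<Sum>i\<in>S. f i p * D i b p) * b' p + b p * (\<Sum>i\<in>S. f i p * D i b' p))"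
    by (simp_all add: derivation_on_add[OF D] derivation_on_mult[OF D] sum.distrib
        sum_distrib_left sum_distrib_right algebra_simps)
next
  fix c b assume "b \<in> A"
  then show "(\<lambda>p. \<Sum>i\<in>S. f i p * D i (\<lambda>p. c * b p) p) = (\<lambda>p. c * (\<Sum>i\<in>S. f i p * D i b p))"
    by (simp add: derivation_on_cmult[OF D] sum_distrib_left algebra_simps)
qed

lemma poisson_bracket_on_cong:
  assumes SA: "fun_subalgebra A" and P: "poisson_bracket_on A P"
    and eq: "\<And>a b. a \<in> A \<Longrightarrow> b \<in> A \<Longrightarrow> Q a b = P a b"
  shows "poisson_bracket_on A Q"
proof -
  have P_antisym: "\<forall>a\<in>A. \<forall>b\<in>A. P a b = (\<lambda>p. - P b a p)"
    and P_right: "\<forall>a\<in>A. derivation_on A (P a)"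
    and P_left: "\<forall>b\<in>A. derivation_on A (\<lambda>a. P a b)"
    and P_jacobi: "\<forall>a\<in>A. \<forall>b\<in>A. \<forall>c\<in>A.
      (\<lambda>p. P a (P b c) p + P b (P c a) p + P c (P a b) p) = (\<lambda>p. 0)"
    using P unfolding poisson_bracket_on_def by blast+
  have closed: "P a b \<in> A" if "a \<in> A" "b \<in> A" for a b
    using derivation_on_closed P_right that by blast
  have "derivation_on A (Q a)" if a: "a \<in> A" for a
    by (rule derivation_on_cong[OF SA, where D = "P a"]) (use P_right a eq in blast)+
  moreover have "derivation_on A (\<lambda>a. Q a b)" if b: "b \<in> A" for b
    by (rule derivation_on_cong[OF SA, where D = "\<lambda>a. P a b"]) (use P_left b eq in blast)+
  moreover have "Q a b = (\<lambda>p. - Q b a p)" if "a \<in> A" "b \<in> A" for a b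
    unfolding eq[OF that] eq[OF that(2,1)] by (rule P_antisym[rule_format, OF that])
  moreover have "(\<lambda>p. Q a (Q b c) p + Q b (Q c a) p + Q c (Q a b) p) = (\<lambda>p. 0)"
    if "a \<in> A" "b \<in> A" "c \<in> A" for a b c
    by (simp only: eq that closed) (rule P_jacobi[rule_format, OF that])
  ultimately show ?thesis
    unfolding poisson_bracket_on_def by blast
qed

section \<open>Bilinear operators built from two families of derivations\<close>

definition bivector_op ::
  "('i::finite \<Rightarrow> ('m \<Rightarrow> complex) \<Rightarrow> ('m \<Rightarrow> complex))
    \<Rightarrow> ('i \<Rightarrow> ('m \<Rightarrow> complex) \<Rightarrow> ('m \<Rightarrow> complex))
    \<Rightarrow> ('m \<Rightarrow> complex) \<Rightarrow> ('m \<Rightarrow> complex) \<Rightarrow> ('m \<Rightarrow> complex)" where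
  "bivector_op E H a b = (\<lambda>p. \<Sum>i\<in>UNIV. E i a p * H i b p)"

lemma bivector_op_closed:
  assumes "fun_subalgebra A" "\<And>i. derivation_on A (E i)" "\<And>i. derivation_on A (H i)" "a \<in> A" "b \<in> A"
  shows "bivector_op E H a b \<in> A"
  unfolding bivector_op_def
  by (intro fun_subalgebra_sum[OF assms(1) finite_class.finite_UNIV] fun_subalgebra_mult[OF assms(1)]
      derivation_on_closed[OF assms(2) assms(4)] derivation_on_closed[OF assms(3) assms(5)])

lemma derivation_on_bivector_op_right:
  assumes "fun_subalgebra A" "\<And>i. derivation_on A (E i)" "\<And>i. derivation_on A (H i)" "a \<in> A"
  shows "derivation_on A (bivector_op E H a)"
  unfolding bivector_op_def
  by (rule derivation_on_combination[OF assms(1) finite_class.finite_UNIV assms(3)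
        derivation_on_closed[OF assms(2) assms(4)]])

lemma derivation_on_bivector_op_left:
  assumes "fun_subalgebra A" "\<And>i. derivation_on A (E i)" "\<And>i. derivation_on A (H i)" "b \<in> A"
  shows "derivation_on A (\<lambda>a. bivector_op E H a b)"
  unfolding bivector_op_def mult.commute[of "E _ _ _"]
  by (rule derivation_on_combination[OF assms(1) finite_class.finite_UNIV assms(2)
        derivation_on_closed[OF assms(3) assms(4)]])

lemma derivation_apply_bivector_op:
  assumes "fun_subalgebra A" "derivation_on A D" "\<And>i. derivation_on A (E i)" "\<And>i. derivation_on A (H i)"
    "a \<in> A" "b \<in> A"
  shows "D (bivector_op E H a b) p = (\<Sum>j\<in>UNIV. D (E j a) p * H j b p + E j a p * D (H j b) p)"
proof -
  have "D (bivector_op E H a b) = (\<lambda>p. \<Sum>j\<in>UNIV. D (\<lambda>q. E j a q * H j b q) p)"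
    unfolding bivector_op_def
    by (intro derivation_on_sum[OF assms(2,1) finite_class.finite_UNIV] fun_subalgebra_mult[OF assms(1)]
        derivation_on_closed[OF assms(3) assms(5)] derivation_on_closed[OF assms(4) assms(6)])
  then show ?thesis
    using derivation_on_mult[OF assms(2)] derivation_on_closed[OF assms(3)] derivation_on_closed[OF assms(4)]
      assms(5,6) by simp
qed

lemma bivector_op_jacobiator:
  fixes E H :: "'i::finite \<Rightarrow> ('m \<Rightarrow> complex) \<Rightarrow> ('m \<Rightarrow> complex)"
  assumes SA: "fun_subalgebra A" and dE: "\<And>i. derivation_on A (E i)" and dH: "\<And>i. derivation_on A (H i)"
    and skew: "\<And>x y. x \<in> A \<Longrightarrow> y \<in> A \<Longrightarrow> bivector_op H E x y = (\<lambda>p. - bivector_op E H x y p)"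
    and abc: "a \<in> A" "b \<in> A" "c \<in> A"
  shows "bivector_op E H a (bivector_op E H b c) p - bivector_op E H b (bivector_op E H a c) p
      - bivector_op E H (bivector_op E H a b) c p
    = (\<Sum>i\<in>UNIV. \<Sum>j\<in>UNIV. E i a p * E j b p * (H i (H j c) p - H j (H i c) p)
        + E i a p * (H i (E j b) p - E j (H i b) p) * H j c p
        + H i b p * H j c p * (E i (E j a) p - E j (E i a) p))"
proof -
  note apply_F = derivation_apply_bivector_op[where E = E and H = H, OF SA _ dE dH]
  have EA: "E i x \<in> A" if "x \<in> A" for i x using derivation_on_closed[OF dE that] .
  have s1: "bivector_op E H a (bivector_op E H b c) p = (\<Sum>i\<in>UNIV. \<Sum>j\<in>UNIV.
      E i a p * H i (E j b) p * H j c p + E i a p * E j b p * H i (H j c) p)"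
    by (simp add: bivector_op_def[of E H a] apply_F[OF dH] abc sum_distrib_left algebra_simps)
  have s2: "bivector_op E H b (bivector_op E H a c) p = (\<Sum>i\<in>UNIV. \<Sum>j\<in>UNIV.
      E i b p * H i (E j a) p * H j c p + E i b p * E j a p * H i (H j c) p)"
    by (simp add: bivector_op_def[of E H b] apply_F[OF dH] abc sum_distrib_left algebra_simps)
  have s3: "bivector_op E H (bivector_op E H a b) c p = (\<Sum>i\<in>UNIV. \<Sum>j\<in>UNIV.
      E i (E j a) p * H j b p * H i c p + E j a p * E i (H j b) p * H i c p)"
    by (simp add: bivector_op_def[of E H "bivector_op E H a b"] apply_F[OF dE] abc
        sum_distrib_left sum_distrib_right algebra_simps)
  have w1: "(\<Sum>i\<in>UNIV. \<Sum>j\<in>UNIV. E i b p * E j a p * H i (H j c) p)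
      = (\<Sum>i\<in>UNIV. \<Sum>j\<in>UNIV. E j b p * E i a p * H j (H i c) p)"
    by (rule sum.swap)
  have w2: "(\<Sum>i\<in>UNIV. \<Sum>j\<in>UNIV. E i (E j a) p * H j b p * H i c p)
      = (\<Sum>i\<in>UNIV. \<Sum>j\<in>UNIV. E j (E i a) p * H i b p * H j c p)"
    by (rule sum.swap)
  have w3: "(\<Sum>i\<in>UNIV. \<Sum>j\<in>UNIV. E j a p * E i (H j b) p * H i c p)
      = (\<Sum>i\<in>UNIV. \<Sum>j\<in>UNIV. E i a p * E j (H i b) p * H j c p)"
    by (rule sum.swap)
  \<comment> \<open>The only use of skew-symmetry: it moves the outer derivative from b onto a.\<close>
  have w4: "(\<Sum>i\<in>UNIV. \<Sum>j\<in>UNIV. E i b p * H i (E j a) p * H j c p)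
      = - (\<Sum>i\<in>UNIV. \<Sum>j\<in>UNIV. H i b p * H j c p * E i (E j a) p)"
  proof -
    have "(\<Sum>i\<in>UNIV. \<Sum>j\<in>UNIV. E i b p * H i (E j a) p * H j c p)
        = (\<Sum>j\<in>UNIV. H j c p * bivector_op H E (E j a) b p)"
      by (subst sum.swap) (simp add: bivector_op_def sum_distrib_left mult_ac)
    also have "\<dots> = - (\<Sum>j\<in>UNIV. H j c p * bivector_op E H (E j a) b p)"
      by (simp add: skew EA abc sum_negf)
    also have "\<dots> = - (\<Sum>i\<in>UNIV. \<Sum>j\<in>UNIV. H i b p * H j c p * E i (E j a) p)"
      by (subst sum.swap) (simp add: bivector_op_def sum_distrib_left mult_ac)
    finally show ?thesis .
  qed
  have "(\<Sum>i\<in>UNIV. \<Sum>j\<in>UNIV. E i a p * E j b p * (H i (H j c) p - H j (H i c) p)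
        + E i a p * (H i (E j b) p - E j (H i b) p) * H j c p
        + H i b p * H j c p * (E i (E j a) p - E j (E i a) p))
    = (\<Sum>i\<in>UNIV. \<Sum>j\<in>UNIV. E i a p * E j b p * H i (H j c) p)
      + (\<Sum>i\<in>UNIV. \<Sum>j\<in>UNIV. E i a p * H i (E j b) p * H j c p)
      - (\<Sum>i\<in>UNIV. \<Sum>j\<in>UNIV. E j b p * E i a p * H j (H i c) p)
      - (\<Sum>i\<in>UNIV. \<Sum>j\<in>UNIV. E i a p * E j (H i b) p * H j c p)
      + (\<Sum>i\<in>UNIV. \<Sum>j\<in>UNIV. H i b p * H j c p * E i (E j a) p)
      - (\<Sum>i\<in>UNIV. \<Sum>j\<in>UNIV. E j (E i a) p * H i b p * H j c p)"
    by (simp add: sum.distrib sum_subtractf algebra_simps)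
  also have "\<dots> = bivector_op E H a (bivector_op E H b c) p - bivector_op E H b (bivector_op E H a c) p
      - bivector_op E H (bivector_op E H a b) c p"
    unfolding s1 s2 s3 w1[symmetric] w2[symmetric] w3[symmetric]
    by (simp add: sum.distrib w4)
  finally show ?thesis by simp
qed

lemma structure_constants_cancel:
  fixes al be ga de :: "'i::finite \<Rightarrow> 'i \<Rightarrow> 'i \<Rightarrow> 'a::comm_ring"
  assumes R1: "\<And>i j k. al i j k + ga i k j = 0" and R2: "\<And>i j k. be k j i + de i j k = 0"
  shows "(\<Sum>i\<in>UNIV. \<Sum>j\<in>UNIV. Ea i * Eb j * (\<Sum>k\<in>UNIV. al i j k * Hc k)
      + Ea i * (\<Sum>k\<in>UNIV. be i j k * Hb k + ga i j k * Eb k) * Hc j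
      + Hb i * Hc j * (\<Sum>k\<in>UNIV. de i j k * Ea k)) = 0"
proof -
  have "(\<Sum>i\<in>UNIV. \<Sum>j\<in>UNIV. \<Sum>k\<in>UNIV. Ea i * ga i j k * Eb k * Hc j)
      = (\<Sum>i\<in>UNIV. \<Sum>j\<in>UNIV. \<Sum>k\<in>UNIV. Ea i * ga i k j * Eb j * Hc k)"
    by (rule sum.cong[OF refl], rule sum.swap)
  then have "(\<Sum>i\<in>UNIV. \<Sum>j\<in>UNIV. \<Sum>k\<in>UNIV.
      Ea i * Eb j * al i j k * Hc k + Ea i * ga i j k * Eb k * Hc j)
    = (\<Sum>i\<in>UNIV. \<Sum>j\<in>UNIV. \<Sum>k\<in>UNIV. Ea i * Eb j * Hc k * (al i j k + ga i k j))"
    by (simp add: sum.distrib algebra_simps)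
  then have al_ga: "(\<Sum>i\<in>UNIV. \<Sum>j\<in>UNIV. \<Sum>k\<in>UNIV.
      Ea i * Eb j * al i j k * Hc k + Ea i * ga i j k * Eb k * Hc j) = 0"
    by (simp add: R1)
  have "(\<Sum>i\<in>UNIV. \<Sum>j\<in>UNIV. \<Sum>k\<in>UNIV. Hb i * Hc j * de i j k * Ea k)
      = (\<Sum>k\<in>UNIV. \<Sum>j\<in>UNIV. \<Sum>i\<in>UNIV. Hb i * Hc j * de i j k * Ea k)"
    by (subst sum.swap, subst (1 2) sum.swap) (rule refl)
  then have "(\<Sum>i\<in>UNIV. \<Sum>j\<in>UNIV. \<Sum>k\<in>UNIV.
      Ea i * be i j k * Hb k * Hc j + Hb i * Hc j * de i j k * Ea k)
    = (\<Sum>i\<in>UNIV. \<Sum>j\<in>UNIV. \<Sum>k\<in>UNIV. Ea i * Hb k * Hc j * (be i j k + de k j i))"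
    by (simp add: sum.distrib algebra_simps)
  then have be_de: "(\<Sum>i\<in>UNIV. \<Sum>j\<in>UNIV. \<Sum>k\<in>UNIV.
      Ea i * be i j k * Hb k * Hc j + Hb i * Hc j * de i j k * Ea k) = 0"
    by (simp add: R2)
  have "(\<Sum>i\<in>UNIV. \<Sum>j\<in>UNIV. Ea i * Eb j * (\<Sum>k\<in>UNIV. al i j k * Hc k)
      + Ea i * (\<Sum>k\<in>UNIV. be i j k * Hb k + ga i j k * Eb k) * Hc j
      + Hb i * Hc j * (\<Sum>k\<in>UNIV. de i j k * Ea k))
    = (\<Sum>i\<in>UNIV. \<Sum>j\<in>UNIV. \<Sum>k\<in>UNIV.
        Ea i * Eb j * al i j k * Hc k + Ea i * ga i j k * Eb k * Hc j)
      + (\<Sum>i\<in>UNIV. \<Sum>j\<in>UNIV. \<Sum>k\<in>UNIV.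
        Ea i * be i j k * Hb k * Hc j + Hb i * Hc j * de i j k * Ea k)"
    by (simp add: sum_distrib_left sum_distrib_right sum.distrib algebra_simps)
  then show ?thesis
    unfolding al_ga be_de by simp
qed

lemma poisson_bracket_on_bivector_op:
  fixes E H :: "'i::finite \<Rightarrow> ('m \<Rightarrow> complex) \<Rightarrow> ('m \<Rightarrow> complex)"
  assumes SA: "fun_subalgebra A" and dE: "\<And>i. derivation_on A (E i)" and dH: "\<And>i. derivation_on A (H i)"
    and skew: "\<And>x y. x \<in> A \<Longrightarrow> y \<in> A \<Longrightarrow> bivector_op H E x y = (\<lambda>p. - bivector_op E H x y p)"
    and HH: "\<And>x i j p. x \<in> A \<Longrightarrow> H i (H j x) p - H j (H i x) p = (\<Sum>k\<in>UNIV. al i j k * H k x p)"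
    and HE: "\<And>x i j p. x \<in> A \<Longrightarrow>
      H i (E j x) p - E j (H i x) p = (\<Sum>k\<in>UNIV. be i j k * H k x p + ga i j k * E k x p)"
    and EE: "\<And>x i j p. x \<in> A \<Longrightarrow> E i (E j x) p - E j (E i x) p = (\<Sum>k\<in>UNIV. de i j k * E k x p)"
    and R1: "\<And>i j k. al i j k + ga i k j = 0" and R2: "\<And>i j k. be k j i + de i j k = 0"
  shows "poisson_bracket_on A (bivector_op E H)"
proof -
  let ?F = "bivector_op E H"
  have closed: "?F a b \<in> A" if "a \<in> A" "b \<in> A" for a b
    using bivector_op_closed[of A E H, OF SA dE dH that] .
  have antisym: "?F a b = (\<lambda>p. - ?F b a p)" if "a \<in> A" "b \<in> A" for a b
  proof -
    have "?F b a = bivector_op H E a b" by (simp add: bivector_op_def mult.commute)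
    then show ?thesis using skew[OF that] by simp
  qed
  have jacobi: "(\<lambda>p. ?F a (?F b c) p + ?F b (?F c a) p + ?F c (?F a b) p) = (\<lambda>p. 0)"
    if abc: "a \<in> A" "b \<in> A" "c \<in> A" for a b c
  proof -
    have leibniz: "?F a (?F b c) p - ?F b (?F a c) p - ?F (?F a b) c p = 0" for p
    proof -
      have "?F a (?F b c) p - ?F b (?F a c) p - ?F (?F a b) c p
        = (\<Sum>i\<in>UNIV. \<Sum>j\<in>UNIV. E i a p * E j b p * (H i (H j c) p - H j (H i c) p)
            + E i a p * (H i (E j b) p - E j (H i b) p) * H j c p
            + H i b p * H j c p * (E i (E j a) p - E j (E i a) p))"
        by (rule bivector_op_jacobiator[where E = E and H = H, OF SA dE dH _ abc]) (rule skew)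
      also have "\<dots> = (\<Sum>i\<in>UNIV. \<Sum>j\<in>UNIV. E i a p * E j b p * (\<Sum>k\<in>UNIV. al i j k * H k c p)
          + E i a p * (\<Sum>k\<in>UNIV. be i j k * H k b p + ga i j k * E k b p) * H j c p
          + H i b p * H j c p * (\<Sum>k\<in>UNIV. de i j k * E k a p))"
        by (simp only: HH[OF abc(3)] HE[OF abc(2)] EE[OF abc(1)])
      also have "\<dots> = 0"
        by (rule structure_constants_cancel) (fact R1, fact R2)
      finally show ?thesis .
    qed
    have "?F b (?F c a) = ?F b (\<lambda>p. (-1) * ?F a c p)"
      using antisym[OF abc(3,1)] by simp
    also have "\<dots> = (\<lambda>p. (-1) * ?F b (?F a c) p)"
      by (rule derivation_on_cmult[OF derivation_on_bivector_op_right[of A E H, OF SA dE dH abc(2)]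
            closed[OF abc(1,3)]])
    finally have "?F b (?F c a) = (\<lambda>p. - ?F b (?F a c) p)"
      by simp
    moreover have "?F c (?F a b) = (\<lambda>p. - ?F (?F a b) c p)"
      using antisym[OF abc(3) closed[OF abc(1,2)]] .
    ultimately show ?thesis using leibniz by (simp add: fun_eq_iff)
  qed
  show ?thesis
    unfolding poisson_bracket_on_def
    using antisym jacobi derivation_on_bivector_op_right[of A E H, OF SA dE dH]
      derivation_on_bivector_op_left[of A E H, OF SA dE dH]
    by blast
qed

lemma lie_bracket_on_antisym:
  assumes "lie_bracket_on B"
  shows "B x y + B y x = 0"
proof -
  have "B (x + y) z = B x z + B y z" "B x (y + z) = B x y + B x z" for x y z
    using assms unfolding lie_bracket_on_def by blast+
  then have "B (x + y) (x + y) = B x x + B x y + (B y x + B y y)"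
    by (simp add: add.assoc)
  moreover have "B (x + y) (x + y) = 0" "B x x = 0" "B y y = 0"
    using assms unfolding lie_bracket_on_def by blast+
  ultimately show ?thesis by simp
qed

lemma lie_action_on_derivation: "lie_action_on A B act \<Longrightarrow> derivation_on A (act u)"
  unfolding lie_action_on_def by blast

lemma lie_action_on_add: "lie_action_on A B act \<Longrightarrow> x \<in> A \<Longrightarrow> act (u + v) x = (\<lambda>p. act u x p + act v x p)"
  unfolding lie_action_on_def by blast

lemma lie_action_on_scale: "lie_action_on A B act \<Longrightarrow> x \<in> A \<Longrightarrow> act (c *s u) x = (\<lambda>p. c * act u x p)"
  unfolding lie_action_on_def by blast

lemma lie_action_on_bracket:
  "lie_action_on A B act \<Longrightarrow> x \<in> A \<Longrightarrow> act (B u v) x p = act u (act v x) p - act v (act u x) p"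
  unfolding lie_action_on_def by auto

lemma lie_action_on_sum:
  assumes "lie_action_on A B act" "x \<in> A" "finite S"
  shows "act (\<Sum>k\<in>S. v k) x p = (\<Sum>k\<in>S. act (v k) x p)"
  using assms(3)
proof (induction S rule: finite_induct)
  case empty
  have "act ((0::complex) *s 0) x = (\<lambda>p. 0 * act 0 x p)" using lie_action_on_scale[OF assms(1,2)] .
  then show ?case by simp
next
  case (insert y F)
  then show ?case using lie_action_on_add[OF assms(1,2), of "v y" "\<Sum>k\<in>F. v k"] by simp
qed

lemma wedge_op_eq_combination:
  fixes act :: "'v \<Rightarrow> ('m \<Rightarrow> complex) \<Rightarrow> ('m \<Rightarrow> complex)"
  shows "wedge_op act u v a b = (\<lambda>p. (1/2) * (act u a p * act v b p) + (-1/2) * (act v a p * act u b p))"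
  unfolding wedge_op_def by (auto simp: field_simps)

lemma wedge_op_closed:
  assumes "fun_subalgebra A" "lie_action_on A B act" "a \<in> A" "b \<in> A"
  shows "wedge_op act u v a b \<in> A"
  unfolding wedge_op_eq_combination
  using assms derivation_on_closed[OF lie_action_on_derivation[OF assms(2)]]
  by (intro fun_subalgebra_add fun_subalgebra_cmult fun_subalgebra_mult) auto

lemma lie_action_on_wedge_op_equivariant:
  assumes SA: "fun_subalgebra A" and LA: "lie_action_on A B act" and ab: "a \<in> A" "b \<in> A"
  shows "act x (wedge_op act u v a b) p - wedge_op act u v (act x a) b p - wedge_op act u v a (act x b) p
    = wedge_op act (B x u) v a b p + wedge_op act u (B x v) a b p"
proof -
  note der = lie_action_on_derivation[OF LA]
  have closed: "act w y \<in> A" if "y \<in> A" for w y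
    using derivation_on_closed[OF der that] .
  have "act x (wedge_op act u v a b) = (\<lambda>p. (1/2) * act x (\<lambda>q. act u a q * act v b q) p
      + (-1/2) * act x (\<lambda>q. act v a q * act u b q) p)"
    unfolding wedge_op_eq_combination
    by (intro derivation_on_linear[OF der SA] fun_subalgebra_mult[OF SA] closed ab)
  then show ?thesis
    by (simp add: wedge_op_def derivation_on_mult[OF der] lie_action_on_bracket[OF LA] closed ab
        field_simps)
qed

lemma varpi_equivariant:
  assumes SA: "fun_subalgebra A" and LA: "lie_action_on A B act" and ab: "a \<in> A" "b \<in> A"
  shows "act x (varpi act a b) p - varpi act (act x a) b p - varpi act a (act x b) p = mu_op B act x a b p"
proof -
  have "act x (varpi act a b) = (\<lambda>p. \<Sum>i\<in>UNIV. act x (wedge_op act (etaD i) (hD i) a b) p)"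
    unfolding varpi_def
    by (intro derivation_on_sum[OF lie_action_on_derivation[OF LA] SA] wedge_op_closed[OF SA LA ab]) simp
  then show ?thesis
    by (simp add: varpi_def mu_op_def lie_action_on_wedge_op_equivariant[OF SA LA ab, symmetric]
        sum_subtractf)
qed

section \<open>The Drinfeld double\<close>

lemma pairD_etaD: "pairD u (etaD k) = u $ Inl k"
proof -
  have "pairD u (etaD k) = (\<Sum>i\<in>UNIV. if i = k then u $ Inl i else 0)"
    unfolding pairD_def etaD_def axis_def by (intro sum.cong) auto
  then show ?thesis by simp
qed

lemma pairD_hD: "pairD u (hD k) = u $ Inr k"
proof -
  have "pairD u (hD k) = (\<Sum>i\<in>UNIV. if i = k then u $ Inr i else 0)"
    unfolding pairD_def hD_def axis_def by (intro sum.cong) auto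
  then show ?thesis by simp
qed

lemma pairD_commute: "pairD u v = pairD v u"
  unfolding pairD_def by (simp add: mult.commute add.commute)

lemma pairD_add_right: "pairD u (v + w) = pairD u v + pairD u w"
  unfolding pairD_def by (simp add: sum.distrib algebra_simps)

lemma lie_action_on_basis_expansion:
  assumes "lie_action_on A B act" "x \<in> A"
  shows "act u x p = (\<Sum>k\<in>UNIV. pairD u (etaD k) * act (hD k) x p + pairD u (hD k) * act (etaD k) x p)"
proof -
  have "act u x p = act (\<Sum>k\<in>UNIV. u $ k *s axis k 1) x p"
    by (simp only: basis_expansion)
  also have "\<dots> = (\<Sum>k\<in>UNIV. u $ k * act (axis k 1) x p)"
    by (simp add: lie_action_on_sum[OF assms] lie_action_on_scale[OF assms])
  also have "\<dots> = (\<Sum>k\<in>UNIV. u $ Inl k * act (hD k) x p) + (\<Sum>k\<in>UNIV. u $ Inr k * act (etaD k) x p)"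
    by (simp add: sum.Plus flip: UNIV_Plus_UNIV) (simp add: hD_def etaD_def comp_def)
  finally show ?thesis
    by (simp add: pairD_etaD pairD_hD sum.distrib)
qed

lemma invariant_pairD_skew:
  assumes "lie_bracket_on B" "\<And>u v w. pairD (B u v) w = pairD u (B v w)"
  shows "pairD (B u v) w + pairD (B u w) v = 0"
proof -
  have "pairD (B u v) w + pairD (B u w) v = pairD u (B v w + B w v)"
    by (simp add: assms(2) pairD_add_right)
  also have "\<dots> = 0"
    by (simp add: lie_bracket_on_antisym[OF assms(1)] pairD_def)
  finally show ?thesis .
qed

lemma pairD_embH_embH: "pairD (embH x) (embH y) = 0"
  by (simp add: pairD_def embH_def)

lemma pairD_embHs_embHs: "pairD (embHs x) (embHs y) = 0"
  by (simp add: pairD_def embHs_def)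

lemma hD_eq_embH: "hD i = embH (axis i 1)"
  by (simp add: vec_eq_iff hD_def embH_def axis_def split: sum.split)

lemma etaD_eq_embHs: "etaD i = embHs (axis i 1)"
  by (simp add: vec_eq_iff etaD_def embHs_def axis_def split: sum.split)

lemma drinfeld_double_bracket_hD_hD_isotropic:
  "drinfeld_double_bracket br delta bD \<Longrightarrow> pairD (bD (hD i) (hD j)) (hD k) = 0"
  unfolding drinfeld_double_bracket_def by (simp add: hD_eq_embH pairD_embH_embH)

lemma drinfeld_double_bracket_etaD_etaD_isotropic:
  "drinfeld_double_bracket br delta bD \<Longrightarrow> pairD (bD (etaD i) (etaD j)) (etaD k) = 0"
  unfolding drinfeld_double_bracket_def by (simp add: etaD_eq_embHs pairD_embHs_embHs)

lemma drinfeld_double_action_commutators: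
  assumes DD: "drinfeld_double_bracket br delta bD" and LA: "lie_action_on A bD act" and x: "x \<in> A"
  shows "act (hD i) (act (hD j) x) p - act (hD j) (act (hD i) x) p
      = (\<Sum>k\<in>UNIV. pairD (bD (hD i) (hD j)) (etaD k) * act (hD k) x p)"
    and "act (hD i) (act (etaD j) x) p - act (etaD j) (act (hD i) x) p
      = (\<Sum>k\<in>UNIV. pairD (bD (hD i) (etaD j)) (etaD k) * act (hD k) x p
          + pairD (bD (hD i) (etaD j)) (hD k) * act (etaD k) x p)"
    and "act (etaD i) (act (etaD j) x) p - act (etaD j) (act (etaD i) x) p
      = (\<Sum>k\<in>UNIV. pairD (bD (etaD i) (etaD j)) (hD k) * act (etaD k) x p)"
proof -
  have "act u (act v x) p - act v (act u x) p
      = (\<Sum>k\<in>UNIV. pairD (bD u v) (etaD k) * act (hD k) x p + pairD (bD u v) (hD k) * act (etaD k) x p)"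
    for u v
    using lie_action_on_bracket[OF LA x, of u v p] lie_action_on_basis_expansion[OF LA x, of "bD u v" p]
    by simp
  then show "act (hD i) (act (hD j) x) p - act (hD j) (act (hD i) x) p
      = (\<Sum>k\<in>UNIV. pairD (bD (hD i) (hD j)) (etaD k) * act (hD k) x p)"
    and "act (hD i) (act (etaD j) x) p - act (etaD j) (act (hD i) x) p
      = (\<Sum>k\<in>UNIV. pairD (bD (hD i) (etaD j)) (etaD k) * act (hD k) x p
          + pairD (bD (hD i) (etaD j)) (hD k) * act (etaD k) x p)"
    and "act (etaD i) (act (etaD j) x) p - act (etaD j) (act (etaD i) x) p
      = (\<Sum>k\<in>UNIV. pairD (bD (etaD i) (etaD j)) (hD k) * act (etaD k) x p)"
    by (simp_all add: drinfeld_double_bracket_hD_hD_isotropic[OF DD]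
        drinfeld_double_bracket_etaD_etaD_isotropic[OF DD])
qed

lemma drinfeld_double_structure_constants:
  assumes "drinfeld_double_bracket br delta bD"
  shows "pairD (bD (hD i) (hD j)) (etaD k) + pairD (bD (hD i) (etaD k)) (hD j) = 0"
    and "pairD (bD (hD k) (etaD j)) (etaD i) + pairD (bD (etaD i) (etaD j)) (hD k) = 0"
proof -
  have LB: "lie_bracket_on bD" and inv: "\<And>u v w. pairD (bD u v) w = pairD u (bD v w)"
    using assms unfolding drinfeld_double_bracket_def by blast+
  show "pairD (bD (hD i) (hD j)) (etaD k) + pairD (bD (hD i) (etaD k)) (hD j) = 0"
    by (rule invariant_pairD_skew[OF LB inv])
  have "pairD (bD (etaD i) (etaD j)) (hD k) = pairD (bD (hD k) (etaD i)) (etaD j)"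
    by (simp add: pairD_commute[of _ "hD k"] inv)
  then show "pairD (bD (hD k) (etaD j)) (etaD i) + pairD (bD (etaD i) (etaD j)) (hD k) = 0"
    using invariant_pairD_skew[OF LB inv] by simp
qed

section \<open>Poisson h-base manifolds\<close>

lemma theta_op_zero_imp_skew:
  assumes "theta_op act a b = (\<lambda>p. 0)"
  shows "bivector_op (\<lambda>i. act (hD i)) (\<lambda>i. act (etaD i)) a b
    = (\<lambda>p. - bivector_op (\<lambda>i. act (etaD i)) (\<lambda>i. act (hD i)) a b p)"
proof
  fix p
  have "(\<Sum>i\<in>UNIV. act (etaD i) a p * act (hD i) b p + act (hD i) a p * act (etaD i) b p) = 0"
    using fun_cong[OF assms, of p] unfolding theta_op_def simple_op_def by simp
  then show "bivector_op (\<lambda>i. act (hD i)) (\<lambda>i. act (etaD i)) a b p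
      = - bivector_op (\<lambda>i. act (etaD i)) (\<lambda>i. act (hD i)) a b p"
    unfolding bivector_op_def by (simp add: sum.distrib add_eq_0_iff2 add.commute)
qed

lemma theta_op_zero_imp_varpi_eq:
  assumes "theta_op act a b = (\<lambda>p. 0)"
  shows "varpi act a b = bivector_op (\<lambda>i. act (etaD i)) (\<lambda>i. act (hD i)) a b"
proof
  fix p
  have "varpi act a b p = (bivector_op (\<lambda>i. act (etaD i)) (\<lambda>i. act (hD i)) a b p
      - bivector_op (\<lambda>i. act (hD i)) (\<lambda>i. act (etaD i)) a b p) / 2"
    unfolding varpi_def wedge_op_def bivector_op_def
    by (simp add: sum_divide_distrib[symmetric] sum_subtractf)
  then show "varpi act a b p = bivector_op (\<lambda>i. act (etaD i)) (\<lambda>i. act (hD i)) a b p"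
    by (simp add: theta_op_zero_imp_skew[OF assms])
qed

lemma poisson_base_manifold_bivector_op:
  assumes "poisson_base_manifold br delta bD A act"
  shows "poisson_bracket_on A (bivector_op (\<lambda>i. act (etaD i)) (\<lambda>i. act (hD i)))"
proof -
  have SA: "fun_subalgebra A" and LA: "lie_action_on A bD act"
    and theta: "\<And>a b. a \<in> A \<Longrightarrow> b \<in> A \<Longrightarrow> theta_op act a b = (\<lambda>p. 0)"
    and DD: "drinfeld_double_bracket br delta bD"
    using assms unfolding poisson_base_manifold_def by auto
  note commutators = drinfeld_double_action_commutators[OF DD LA]
  show ?thesis
    by (rule poisson_bracket_on_bivector_op[OF SA lie_action_on_derivation[OF LA] lie_action_on_derivation[OF LA]
          theta_op_zero_imp_skew[OF theta] commutators drinfeld_double_structure_constants[OF DD]])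
qed

theorem proposition3p15:
  fixes br :: "complex^'n::finite \<Rightarrow> complex^'n \<Rightarrow> complex^'n"
    and delta :: "complex^'n \<Rightarrow> complex^'n^'n"
    and bD :: "complex^('n + 'n) \<Rightarrow> complex^('n + 'n) \<Rightarrow> complex^('n + 'n)"
    and A :: "('m \<Rightarrow> complex) set"
    and act :: "complex^('n + 'n) \<Rightarrow> ('m \<Rightarrow> complex) \<Rightarrow> ('m \<Rightarrow> complex)"
  assumes "poisson_base_manifold br delta bD A act"
  shows "poisson_bracket_on A (varpi act)
     \<and> poisson_lie_manifold A act (mu_op bD act) (varpi act)
     \<and> (\<forall>a\<in>A. \<forall>b\<in>A. varpi act a b = (\<lambda>p. \<Sum>i\<in>(UNIV::'n set). act (etaD i) a p * act (hD i) b p))"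
proof -
  have SA: "fun_subalgebra A" and LA: "lie_action_on A bD act"
    and theta: "\<And>a b. a \<in> A \<Longrightarrow> b \<in> A \<Longrightarrow> theta_op act a b = (\<lambda>p. 0)"
    using assms unfolding poisson_base_manifold_def by auto
  have varpi_eq: "varpi act a b = bivector_op (\<lambda>i. act (etaD i)) (\<lambda>i. act (hD i)) a b"
    if "a \<in> A" "b \<in> A" for a b
    using theta_op_zero_imp_varpi_eq[OF theta[OF that]] .
  have "poisson_bracket_on A (varpi act)"
    by (rule poisson_bracket_on_cong[OF SA poisson_base_manifold_bivector_op[OF assms] varpi_eq])
  moreover have "poisson_lie_manifold A act (mu_op bD act) (varpi act)"
    unfolding poisson_lie_manifold_def
    using \<open>poisson_bracket_on A (varpi act)\<close> varpi_equivariant[OF SA LA] by (simp add: fun_eq_iff)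
  ultimately show ?thesis
    using varpi_eq by (simp add: bivector_op_def)
qed

end
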